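(* Assume $n>3t+2d$. In any execution of Algorithm 1, if a correct process $p_i$ mbrb-broadcasts $(m,sn)$ and $d<c-\sqrt{c\cdot\frac{n+t}{2}}$, then at least $c-d$ correct processes mbrb-deliver $(m,sn,i)$ at most three communication steps after the mbrb-broadcast.
   Context: System model. There are $n$ asynchronous processes $p_1,\dots,p_n$ with distinct known identities. Up to $t$ are Byzantine (arbitrary behavior); the rest are correct; $c$ is the number of correct processes in the execution, $n-t\le c\le n$. The network is fully connected, asynchronous, never corrupts/duplicates/creates messages; "broadcast $M$" sends $M$ to all $n$ processes; a message adversary may suppress, per broadcast by a correct process, up to $d$ ($0\le d<c$) copies addressed to correct processes, all other copies among correct processes being received. Signatures are unforgeable and public keys are known. Time is measured in communication steps: local computation takes zero time and every imp-message has the same transfer delay of one step. Algorithm 1 (code for $p_i$). Each process stores, for each triplet $(m,sn,j)$, a set of saved valid signatures of that triplet, at most one per signer. On $\mathrm{mbrb\_broadcast}(m,sn)$: $p_i$ saves its own signature of $(m,sn,i)$ and broadcasts $\mathrm{BUNDLE}(m,sn,i,S)$, $S$ the saved signatures for $(m,sn,i)$. On receiving $\mathrm{BUNDLE}(m,sn,j,sigs)$: if $p_i$ has not already mbrb-delivered some $(-,sn,j)$ and $sigs$ contains a valid signature of $(m,sn,j)$ by $p_j$, then: (1) save all new valid signatures of $(m,sn,j)$ in $sigs$; (2) if $p_i$ has not yet signed any $(-,sn,j)$, save its own signature of $(m,sn,j)$ and broadcast $\mathrm{BUNDLE}(m,sn,j,\text{all saved signatures for }(m,sn,j))$; (3)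 if strictly more than $\frac{n+t}{2}$ signatures for $(m,sn,j)$ are saved, broadcast $\mathrm{BUNDLE}(m,sn,j,\text{all saved signatures})$ and mbrb-deliver $(m,sn,j)$. *)

theory Defs
  imports Complex_Main
begin

(* Processes are identified by 0..<n.  Signatures are modelled abstractly:
   a signature of a triplet (m,sn,j) by signer x is represented by x inside a
   bundle for (m,sn,j); unforgeability is an environment constraint (mbrb_exec). *)

datatype 'm msg = Bundle 'm nat nat "nat set"   (* BUNDLE(m, sn, j, signers) *)

datatype 'm event =
    Bcast 'm nat
  | Recv nat "'m msg"

record 'm pstate =
  psaved     :: "'m \<times> nat \<times> nat \<Rightarrow> nat set"
  psigned    :: "('m \<times> nat \<times> nat) set"
  pdelivered :: "('m \<times> nat \<times> nat) set"

definition init_state :: "'m pstate" where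
  "init_state = \<lparr>psaved = (\<lambda>_. {}), psigned = {}, pdelivered = {}\<rparr>"

(* Algorithm 1, code for p_i, one event; returns new state and list of broadcasts *)
fun handle :: "nat \<Rightarrow> nat \<Rightarrow> nat \<Rightarrow> 'm pstate \<Rightarrow> 'm event \<Rightarrow> 'm pstate \<times> 'm msg list" where
  "handle n t i s (Bcast m sn) =
     (let S = insert i (psaved s (m, sn, i)) in
      (s\<lparr>psaved := (psaved s)((m, sn, i) := S), psigned := insert (m, sn, i) (psigned s)\<rparr>,
       [Bundle m sn i S]))"
| "handle n t i s (Recv src (Bundle m sn j sigs)) =
     (if (\<exists>m'. (m', sn, j) \<in> pdelivered s) \<or> j \<notin> sigs \<or> \<not> j < n then (s, [])
      else
        (let S1 = psaved s (m, sn, j) \<union> (sigs \<inter> {..<n});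
             s1 = s\<lparr>psaved := (psaved s)((m, sn, j) := S1)\<rparr>;
             r2 = (if \<exists>m'. (m', sn, j) \<in> psigned s1 then (s1, [])
                   else (let S2 = insert i S1 in
                         (s1\<lparr>psaved := (psaved s1)((m, sn, j) := S2),
                              psigned := insert (m, sn, j) (psigned s1)\<rparr>,
                          [Bundle m sn j S2])));
             s2 = fst r2; out2 = snd r2;
             S3 = psaved s2 (m, sn, j)
         in if real (card S3) > real (n + t) / 2
            then (s2\<lparr>pdelivered := insert (m, sn, j) (pdelivered s2)\<rparr>, out2 @ [Bundle m sn j S3])
            else (s2, out2)))"

fun run :: "nat \<Rightarrow> nat \<Rightarrow> nat \<Rightarrow> 'm pstate \<Rightarrow> 'm event list \<Rightarrow> 'm pstate \<times> 'm msg list" where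
  "run n t i s [] = (s, [])"
| "run n t i s (e # es) =
     (let r1 = handle n t i s e; r2 = run n t i (fst r1) es in (fst r2, snd r1 @ snd r2))"

(* ev q k = events processed by process q at time (communication step) k *)
primrec pre_state :: "nat \<Rightarrow> nat \<Rightarrow> (nat \<Rightarrow> nat \<Rightarrow> 'm event list) \<Rightarrow> nat \<Rightarrow> nat \<Rightarrow> 'm pstate" where
  "pre_state n t ev q 0 = init_state"
| "pre_state n t ev q (Suc k) = fst (run n t q (pre_state n t ev q k) (ev q k))"

definition state_after :: "nat \<Rightarrow> nat \<Rightarrow> (nat \<Rightarrow> nat \<Rightarrow> 'm event list) \<Rightarrow> nat \<Rightarrow> nat \<Rightarrow> 'm pstate" where
  "state_after n t ev q k = pre_state n t ev q (Suc k)"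

definition outputs :: "nat \<Rightarrow> nat \<Rightarrow> (nat \<Rightarrow> nat \<Rightarrow> 'm event list) \<Rightarrow> nat \<Rightarrow> nat \<Rightarrow> 'm msg list" where
  "outputs n t ev q k = snd (run n t q (pre_state n t ev q k) (ev q k))"

(* Admissible executions: C = set of correct processes; every message between
   processes takes exactly one step; Byzantine messages are arbitrary except for
   unforgeability of correct processes' signatures. *)
definition mbrb_exec :: "nat \<Rightarrow> nat \<Rightarrow> nat \<Rightarrow> nat set \<Rightarrow> (nat \<Rightarrow> nat \<Rightarrow> 'm event list) \<Rightarrow> bool" where
  "mbrb_exec n t d C ev \<longleftrightarrow>
     C \<subseteq> {..<n} \<and> card ({..<n} - C) \<le> t \<and> d < card C \<and>
     \<comment> \<open>senders are processes\<close>
     (\<forall>q\<in>C. \<forall>k s M. Recv s M \<in> set (ev q k) \<longrightarrow> s < n) \<and>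
     \<comment> \<open>no creation / duplication of messages of correct senders; delay one step\<close>
     (\<forall>q\<in>C. \<forall>p\<in>C. \<forall>k M. count_list (ev q k) (Recv p M)
         \<le> (if k = 0 then 0 else count_list (outputs n t ev p (k - 1)) M)) \<and>
     \<comment> \<open>unforgeability: a correct signature reaches a correct process through a Byzantine
         one only if it was signed (and broadcast) at least two steps earlier\<close>
     (\<forall>q\<in>C. \<forall>k b m sn j sigs. b \<notin> C \<longrightarrow> Recv b (Bundle m sn j sigs) \<in> set (ev q k) \<longrightarrow>
         (\<forall>x\<in>sigs \<inter> C. 2 \<le> k \<and> (m, sn, j) \<in> psigned (state_after n t ev x (k - 2)))) \<and>
     \<comment> \<open>message adversary: per broadcast, at most d copies to correct processes suppressed\<close>
     (\<forall>p\<in>C. \<forall>k M. M \<in> set (outputs n t ev p k) \<longrightarrow>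
         card {q\<in>C. Recv p M \<notin> set (ev q (Suc k))} \<le> d) \<and>
     \<comment> \<open>a correct process mbrb-broadcasts at most once per sequence number\<close>
     (\<forall>p\<in>C. \<forall>sn m m' k k'. Bcast m sn \<in> set (ev p k) \<longrightarrow> Bcast m' sn \<in> set (ev p k') \<longrightarrow>
         m = m' \<and> k = k') \<and>
     (\<forall>p\<in>C. \<forall>k m sn. count_list (ev p k) (Bcast m sn) \<le> 1)"

end

(*
  Safety first: every signature of the correct sender i on a triplet (-,sn,i) traces back,
  through correct relays and unforgeability, to i's own broadcast, so only (m,sn,i) is ever
  signed, saved or delivered by a correct process, and nothing happens before step tau.

  Latency: at tau+1 the bundle of i reaches a set W of at least c-d correct processes, and
  each of them (unless someone has already delivered) signs and rebroadcasts, so at tau+2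
  each member of W has its signature delivered to at least c-d correct processes. Double
  counting gives a correct process holding at least |W|(c-d)/c >= (c-d)^2/c > (n+t)/2
  signatures, which forces a delivery by tau+2. That process rebroadcasts its quorum, and the
  at least c-d correct receivers deliver at tau+3.
*)
theory Submission
  imports Defs
begin

definition concerns :: "nat \<Rightarrow> 'm \<times> nat \<times> nat \<Rightarrow> 'm event \<Rightarrow> bool" where
  "concerns i X e \<longleftrightarrow> (case X of (m, sn, j) \<Rightarrow>
     (e = Bcast m sn \<and> j = i) \<or> (\<exists>src sigs. e = Recv src (Bundle m sn j sigs) \<and> j \<in> sigs))"

definition active :: "'m pstate \<Rightarrow> 'm \<times> nat \<times> nat \<Rightarrow> bool" where
  "active s X \<longleftrightarrow> X \<in> psigned s \<or> X \<in> pdelivered s \<or> psaved s X \<noteq> {}"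

definition pstate_le :: "'m pstate \<Rightarrow> 'm pstate \<Rightarrow> bool" where
  "pstate_le s s' \<longleftrightarrow>
     (\<forall>X. psaved s X \<subseteq> psaved s' X) \<and> psigned s \<subseteq> psigned s' \<and> pdelivered s \<subseteq> pdelivered s'"

definition saved_in_range :: "nat \<Rightarrow> 'm pstate \<Rightarrow> bool" where
  "saved_in_range n s \<longleftrightarrow> (\<forall>X. psaved s X \<subseteq> {..<n})"

text \<open>The exception \<open>{r}\<close> is the own signature saved by \<open>mbrb_broadcast\<close>, which
  performs no delivery test.\<close>
definition quorum_saved_delivered :: "nat \<Rightarrow> nat \<Rightarrow> nat \<Rightarrow> nat \<Rightarrow> nat \<Rightarrow> 'm pstate \<Rightarrow> bool" where
  "quorum_saved_delivered n t sn j r s \<longleftrightarrow>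
     (\<forall>m. real (card (psaved s (m, sn, j))) > real (n + t) / 2 \<longrightarrow>
       (\<exists>m'. (m', sn, j) \<in> pdelivered s) \<or> psaved s (m, sn, j) \<subseteq> {r})"

lemma pstate_le_refl [simp]: "pstate_le s s"
  by (simp add: pstate_le_def)

lemma pstate_le_trans: "pstate_le s s' \<Longrightarrow> pstate_le s' s'' \<Longrightarrow> pstate_le s s''"
  unfolding pstate_le_def by blast

lemma pstate_leD:
  "pstate_le s s' \<Longrightarrow> psaved s X \<subseteq> psaved s' X"
  "pstate_le s s' \<Longrightarrow> psigned s \<subseteq> psigned s'"
  "pstate_le s s' \<Longrightarrow> pdelivered s \<subseteq> pdelivered s'"
  unfolding pstate_le_def by blast+

lemma saved_in_range_finite: "saved_in_range n s \<Longrightarrow> finite (psaved s X)"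
  unfolding saved_in_range_def by (meson finite_lessThan finite_subset)

lemma handle_pstate_le: "pstate_le s (fst (handle n t i s e))"
  by (cases "(n, t, i, s, e)" rule: handle.cases) (auto simp: pstate_le_def Let_def)

lemma handle_unconcerned:
  assumes "\<not> concerns i X e"
  shows "psaved (fst (handle n t i s e)) X = psaved s X"
    and "X \<in> psigned (fst (handle n t i s e)) \<longleftrightarrow> X \<in> psigned s"
    and "X \<in> pdelivered (fst (handle n t i s e)) \<longleftrightarrow> X \<in> pdelivered s"
  using assms
  by (cases "(n, t, i, s, e)" rule: handle.cases; cases X; auto simp: concerns_def Let_def)+

lemma handle_output_concerns:
  "Bundle m sn j S \<in> set (snd (handle n t i s e)) \<Longrightarrow> concerns i (m, sn, j) e"
  by (cases "(n, t, i, s, e)" rule: handle.cases) (auto simp: concerns_def Let_def split: if_splits)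

lemma handle_saved_in_range:
  "i < n \<Longrightarrow> saved_in_range n s \<Longrightarrow> saved_in_range n (fst (handle n t i s e))"
  by (cases "(n, t, i, s, e)" rule: handle.cases) (auto simp: saved_in_range_def Let_def)

lemma handle_Bcast:
  "(m, sn, i) \<in> psigned (fst (handle n t i s (Bcast m sn)))"
  "\<exists>S. Bundle m sn i S \<in> set (snd (handle n t i s (Bcast m sn))) \<and> i \<in> S"
  by (auto simp: Let_def)

lemma handle_delivers_outputs_quorum:
  assumes "(m, sn, j) \<notin> pdelivered s" "(m, sn, j) \<in> pdelivered (fst (handle n t i s e))"
    and "saved_in_range n s" "i < n"
  shows "\<exists>S. Bundle m sn j S \<in> set (snd (handle n t i s e))
           \<and> j \<in> S \<and> S \<subseteq> {..<n} \<and> real (card S) > real (n + t) / 2"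
  using assms
  by (cases "(n, t, i, s, e)" rule: handle.cases) (auto simp: saved_in_range_def Let_def split: if_splits)

lemma handle_Recv_quorum_delivers:
  assumes "j \<in> S" "j < n" "saved_in_range n s"
    and "real (card (S \<inter> {..<n})) > real (n + t) / 2"
  shows "\<exists>m'. (m', sn, j) \<in> pdelivered (fst (handle n t i s (Recv src (Bundle m sn j S))))"
proof -
  let ?S1 = "psaved s (m, sn, j) \<union> S \<inter> {..<n}"
  have "finite ?S1" using saved_in_range_finite[OF assms(3)] by simp
  then have "card (S \<inter> {..<n}) \<le> card ?S1" "card (S \<inter> {..<n}) \<le> card (insert i ?S1)"
    by (auto intro: card_mono)
  then show ?thesis using assms by (auto simp: Let_def)
qed

lemma handle_Recv_saves_signers:
  assumes "j \<in> S" "j < n" "\<nexists>m'. (m', sn, j) \<in> pdelivered s"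
  shows "S \<inter> {..<n} \<subseteq> psaved (fst (handle n t i s (Recv src (Bundle m sn j S)))) (m, sn, j)"
    and "\<exists>m'. (m', sn, j) \<in> psigned (fst (handle n t i s (Recv src (Bundle m sn j S))))"
  using assms by (auto simp: Let_def)

lemma handle_first_signature_outputs:
  assumes "\<nexists>m'. (m', sn, j) \<in> psigned s" "(m', sn, j) \<in> psigned (fst (handle n t i s e))" "i \<noteq> j"
  shows "\<exists>m'' S. Bundle m'' sn j S \<in> set (snd (handle n t i s e)) \<and> i \<in> S \<and> j \<in> S"
  using assms
  by (cases "(n, t, i, s, e)" rule: handle.cases) (auto simp: Let_def split: if_splits)

lemma handle_quorum_saved_delivered:
  assumes "quorum_saved_delivered n t sn j i s" "\<nexists>m. e = Bcast m sn \<and> j = i"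
  shows "quorum_saved_delivered n t sn j i (fst (handle n t i s e))"
  using assms
  by (cases "(n, t, i, s, e)" rule: handle.cases)
    (auto simp: quorum_saved_delivered_def Let_def split: if_splits)

lemma handle_own_saved_singleton:
  assumes "\<forall>m. psaved s (m, sn, i) \<subseteq> {i}"
    and "\<nexists>src m sigs. e = Recv src (Bundle m sn i sigs) \<and> i \<in> sigs"
  shows "\<forall>m. psaved (fst (handle n t i s e)) (m, sn, i) \<subseteq> {i}"
  using assms
  by (cases "(n, t, i, s, e)" rule: handle.cases) (auto simp: Let_def split: if_splits)

lemma run_Cons [simp]:
  "run n t i s (e # es) =
     (fst (run n t i (fst (handle n t i s e)) es),
      snd (handle n t i s e) @ snd (run n t i (fst (handle n t i s e)) es))"
  by (simp add: Let_def)

declare run.simps(2) [simp del]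

lemma run_append:
  "fst (run n t i s (es @ es')) = fst (run n t i (fst (run n t i s es)) es')"
  "snd (run n t i s (es @ es')) = snd (run n t i s es) @ snd (run n t i (fst (run n t i s es)) es')"
  by (induction es arbitrary: s) auto

lemma run_invariant:
  assumes "P s" "\<And>s e. e \<in> set E \<Longrightarrow> P s \<Longrightarrow> P (fst (handle n t i s e))"
  shows "P (fst (run n t i s E))"
  using assms by (induction E arbitrary: s) auto

lemma run_pstate_le: "pstate_le s (fst (run n t i s E))"
  by (rule run_invariant[where P = "pstate_le s"]) (auto intro: pstate_le_trans handle_pstate_le)

lemma run_saved_in_range: "i < n \<Longrightarrow> saved_in_range n s \<Longrightarrow> saved_in_range n (fst (run n t i s E))"
  by (rule run_invariant) (auto intro: handle_saved_in_range)

lemma run_event: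
  assumes "E = es @ e # es'"
  shows "pstate_le (fst (handle n t i (fst (run n t i s es)) e)) (fst (run n t i s E))"
    and "set (snd (handle n t i (fst (run n t i s es)) e)) \<subseteq> set (snd (run n t i s E))"
  using run_pstate_le by (auto simp: assms run_append)

lemma run_output:
  "M \<in> set (snd (run n t i s E)) \<Longrightarrow>
     \<exists>es e es'. E = es @ e # es' \<and> M \<in> set (snd (handle n t i (fst (run n t i s es)) e))"
proof (induction E arbitrary: s)
  case (Cons e E)
  show ?case
  proof (cases "M \<in> set (snd (handle n t i s e))")
    case True
    then show ?thesis by (metis append_Nil run.simps(1) fst_conv)
  next
    case False
    with Cons.prems have "M \<in> set (snd (run n t i (fst (handle n t i s e)) E))" by simp
    from Cons.IH[OF this] obtain es e' es' where
      "E = es @ e' # es'" "M \<in> set (snd (handle n t i (fst (run n t i (fst (handle n t i s e)) es)) e'))"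
      by auto
    then show ?thesis by (metis Cons_eq_appendI run_Cons fst_conv)
  qed
qed simp

lemma run_first_change:
  "\<not> P s \<Longrightarrow> P (fst (run n t i s E)) \<Longrightarrow>
     \<exists>es e es'. E = es @ e # es' \<and> \<not> P (fst (run n t i s es))
       \<and> P (fst (handle n t i (fst (run n t i s es)) e))"
proof (induction E arbitrary: s)
  case (Cons e E)
  show ?case
  proof (cases "P (fst (handle n t i s e))")
    case True
    with Cons.prems show ?thesis by (metis append_Nil run.simps(1) fst_conv)
  next
    case False
    from Cons.IH[of "fst (handle n t i s e)"] False Cons.prems(2) obtain es e' es'
      where "E = es @ e' # es'"
      "\<not> P (fst (run n t i (fst (handle n t i s e)) es))"
      "P (fst (handle n t i (fst (run n t i (fst (handle n t i s e)) es)) e'))"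
      by fastforce
    then show ?thesis by (metis Cons_eq_appendI run_Cons fst_conv)
  qed
qed simp

lemma run_output_concerns:
  "Bundle m sn j S \<in> set (snd (run n t i s E)) \<Longrightarrow> \<exists>e\<in>set E. concerns i (m, sn, j) e"
  by (fastforce dest: run_output handle_output_concerns)

lemma run_active_origin:
  assumes "active (fst (run n t i s E)) X"
  shows "active s X \<or> (\<exists>e\<in>set E. concerns i X e)"
proof (rule ccontr)
  assume contra: "\<not> ?thesis"
  with assms obtain es e es' where E: "E = es @ e # es'"
    and before: "\<not> active (fst (run n t i s es)) X"
    and after: "active (fst (handle n t i (fst (run n t i s es)) e)) X"
    using run_first_change[where P = "\<lambda>s. active s X"] by blast
  from contra E have "\<not> concerns i X e" by auto
  from handle_unconcerned[OF this] before after show False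
    unfolding active_def by blast
qed

lemma run_Bcast:
  assumes "Bcast m sn \<in> set E"
  shows "(m, sn, i) \<in> psigned (fst (run n t i s E))"
    and "\<exists>S. Bundle m sn i S \<in> set (snd (run n t i s E)) \<and> i \<in> S"
proof -
  obtain es es' where E: "E = es @ Bcast m sn # es'" using split_list[OF assms] by blast
  from handle_Bcast[where n = n and t = t and i = i and s = "fst (run n t i s es)"]
    run_event[OF E, where n = n and t = t and i = i and s = s]
  show "(m, sn, i) \<in> psigned (fst (run n t i s E))"
    and "\<exists>S. Bundle m sn i S \<in> set (snd (run n t i s E)) \<and> i \<in> S"
    unfolding pstate_le_def by blast+
qed

lemma run_delivers_outputs_quorum:
  assumes "(m, sn, j) \<notin> pdelivered s" "(m, sn, j) \<in> pdelivered (fst (run n t i s E))"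
    and "saved_in_range n s" "i < n"
  shows "\<exists>S. Bundle m sn j S \<in> set (snd (run n t i s E))
           \<and> j \<in> S \<and> S \<subseteq> {..<n} \<and> real (card S) > real (n + t) / 2"
proof -
  obtain es e es' where E: "E = es @ e # es'"
    and "(m, sn, j) \<notin> pdelivered (fst (run n t i s es))"
    and "(m, sn, j) \<in> pdelivered (fst (handle n t i (fst (run n t i s es)) e))"
    using run_first_change[where P = "\<lambda>s. (m, sn, j) \<in> pdelivered s", OF assms(1,2)] by blast
  with handle_delivers_outputs_quorum[OF _ _ run_saved_in_range[OF assms(4,3)] assms(4)]
    run_event(2)[OF E, where n = n and t = t and i = i and s = s]
  show ?thesis by blast
qed

lemma run_Recv_quorum_delivers:
  assumes "Recv src (Bundle m sn j S) \<in> set E" "j \<in> S" "j < n" "saved_in_range n s" "i < n"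
    and "real (card (S \<inter> {..<n})) > real (n + t) / 2"
  shows "\<exists>m'. (m', sn, j) \<in> pdelivered (fst (run n t i s E))"
proof -
  obtain es es' where E: "E = es @ Recv src (Bundle m sn j S) # es'"
    using split_list[OF assms(1)] by blast
  from handle_Recv_quorum_delivers[OF assms(2,3) run_saved_in_range[OF assms(5,4)] assms(6)]
    run_event(1)[OF E, where n = n and t = t and i = i and s = s]
  show ?thesis unfolding pstate_le_def by blast
qed

lemma run_Recv_saves_signers:
  assumes "Recv src (Bundle m sn j S) \<in> set E" "j \<in> S" "j < n"
    and "\<nexists>m'. (m', sn, j) \<in> pdelivered (fst (run n t i s E))"
  shows "S \<inter> {..<n} \<subseteq> psaved (fst (run n t i s E)) (m, sn, j)"
    and "\<exists>m'. (m', sn, j) \<in> psigned (fst (run n t i s E))"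
proof -
  obtain es es' where E: "E = es @ Recv src (Bundle m sn j S) # es'"
    using split_list[OF assms(1)] by blast
  let ?s = "fst (run n t i s es)"
  have le: "pstate_le ?s (fst (run n t i s E))"
    using handle_pstate_le run_event(1)[OF E, where n = n and t = t and i = i and s = s]
      pstate_le_trans by blast
  with assms(4) have "\<nexists>m'. (m', sn, j) \<in> pdelivered ?s"
    unfolding pstate_le_def by blast
  from handle_Recv_saves_signers[OF assms(2,3) this]
    run_event(1)[OF E, where n = n and t = t and i = i and s = s]
  show "S \<inter> {..<n} \<subseteq> psaved (fst (run n t i s E)) (m, sn, j)"
    and "\<exists>m'. (m', sn, j) \<in> psigned (fst (run n t i s E))"
    unfolding pstate_le_def by blast+
qed

lemma run_first_signature_outputs:
  assumes "\<nexists>m'. (m', sn, j) \<in> psigned s" "(m', sn, j) \<in> psigned (fst (run n t i s E))" "i \<noteq> j"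
  shows "\<exists>m'' S. Bundle m'' sn j S \<in> set (snd (run n t i s E)) \<and> i \<in> S \<and> j \<in> S"
proof -
  obtain es e es' m'' where E: "E = es @ e # es'"
    and before: "\<nexists>m'. (m', sn, j) \<in> psigned (fst (run n t i s es))"
    and after: "(m'', sn, j) \<in> psigned (fst (handle n t i (fst (run n t i s es)) e))"
    using run_first_change[where P = "\<lambda>s. \<exists>m'. (m', sn, j) \<in> psigned s"] assms(1,2) by blast
  from handle_first_signature_outputs[OF before after assms(3)] obtain m3 S
    where "Bundle m3 sn j S \<in> set (snd (handle n t i (fst (run n t i s es)) e))" "i \<in> S" "j \<in> S"
    by blast
  with run_event(2)[OF E, where n = n and t = t and i = i and s = s] show ?thesis by blast
qed

lemma run_quorum_saved_delivered:
  fixes s :: "'m pstate"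
  assumes "quorum_saved_delivered n t sn j i s" "\<forall>e\<in>set E. \<nexists>m. e = Bcast m sn \<and> j = i"
  shows "quorum_saved_delivered n t sn j i (fst (run n t i s E))"
proof (rule run_invariant[where P = "quorum_saved_delivered n t sn j i"])
  fix s' :: "'m pstate" and e
  assume "e \<in> set E" "quorum_saved_delivered n t sn j i s'"
  with assms(2) show "quorum_saved_delivered n t sn j i (fst (handle n t i s' e))"
    by (intro handle_quorum_saved_delivered) auto
qed (fact assms(1))

lemma run_own_saved_singleton:
  fixes s :: "'m pstate"
  assumes "\<forall>m. psaved s (m, sn, i) \<subseteq> {i}"
    and "\<forall>e\<in>set E. \<nexists>src m sigs. e = Recv src (Bundle m sn i sigs) \<and> i \<in> sigs"
  shows "\<forall>m. psaved (fst (run n t i s E)) (m, sn, i) \<subseteq> {i}"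
proof (rule run_invariant[where P = "\<lambda>s. \<forall>m. psaved s (m, sn, i) \<subseteq> {i}"])
  fix s' :: "'m pstate" and e
  assume "e \<in> set E" "\<forall>m. psaved s' (m, sn, i) \<subseteq> {i}"
  with assms(2) show "\<forall>m. psaved (fst (handle n t i s' e)) (m, sn, i) \<subseteq> {i}"
    by (intro handle_own_saved_singleton) auto
qed (fact assms(1))

lemma ex_first_step: "\<not> P 0 \<Longrightarrow> P K \<Longrightarrow> \<exists>k<K. \<not> P k \<and> P (Suc k)"
  by (induction K) (auto intro: less_SucI)

lemma square_gt_of_less_diff_sqrt:
  assumes "real d < real c - sqrt x" "0 \<le> x"
  shows "x < real ((c - d) * (c - d))"
proof -
  have "d < c" using assms real_sqrt_ge_zero[OF assms(2)] by linarith
  then have "sqrt x < real (c - d)"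
    using assms(1) by (simp add: of_nat_diff)
  then have "(sqrt x)\<^sup>2 < (real (c - d))\<^sup>2"
    by (rule power_strict_mono) (simp_all add: assms(2))
  with assms(2) show ?thesis by (simp add: power2_eq_square del: of_nat_diff)
qed

lemma double_counting_pigeonhole:
  assumes "finite A" "finite B" "\<And>b. b \<in> B \<Longrightarrow> k \<le> card {a\<in>A. R a b}"
    and "real (card A) * x < real (card B * k)"
  shows "\<exists>a\<in>A. x < real (card {b\<in>B. R a b})"
proof (rule ccontr)
  assume "\<not> ?thesis"
  then have "(\<Sum>a\<in>A. real (card {b\<in>B. R a b})) \<le> real (card A) * x"
    by (intro sum_bounded_above) (simp add: not_less)
  moreover have "card B * k \<le> (\<Sum>a\<in>A. card {b\<in>B. R a b})"
  proof -
    have "card B * k \<le> (\<Sum>b\<in>B. card {a\<in>A. R a b})"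
      using sum_bounded_below[of B k "\<lambda>b. card {a\<in>A. R a b}"] assms(3) by simp
    also have "\<dots> = (\<Sum>a\<in>A. card {b\<in>B. R a b})"
      using sum.swap_restrict[OF assms(1,2), of "\<lambda>_ _. 1::nat" R] by simp
    finally show ?thesis .
  qed
  then have "real (card B * k) \<le> (\<Sum>a\<in>A. real (card {b\<in>B. R a b}))"
    by (simp only: of_nat_sum[symmetric] of_nat_le_iff)
  ultimately show False using assms(4) by linarith
qed

locale mbrb_execution =
  fixes n t d :: nat and C :: "nat set" and ev :: "nat \<Rightarrow> nat \<Rightarrow> 'm event list"
  assumes exec: "mbrb_exec n t d C ev"
begin

lemma correct_less_n: "q \<in> C \<Longrightarrow> q < n"
  using exec by (auto simp: mbrb_exec_def)

lemma finite_correct: "finite C"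
  using exec unfolding mbrb_exec_def by (meson finite_lessThan finite_subset)

lemma d_less_card_correct: "d < card C"
  using exec by (simp add: mbrb_exec_def)

lemma Bcast_unique:
  "p \<in> C \<Longrightarrow> Bcast m sn \<in> set (ev p k) \<Longrightarrow> Bcast m' sn \<in> set (ev p k') \<Longrightarrow> m = m' \<and> k = k'"
  using exec unfolding mbrb_exec_def by blast

lemma received_from_correct:
  assumes "q \<in> C" "p \<in> C" "Recv p M \<in> set (ev q k)"
  shows "0 < k \<and> M \<in> set (outputs n t ev p (k - 1))"
proof -
  have "\<forall>q\<in>C. \<forall>p\<in>C. \<forall>k M. count_list (ev q k) (Recv p M)
          \<le> (if k = 0 then 0 else count_list (outputs n t ev p (k - 1)) M)"
    using exec unfolding mbrb_exec_def by (elim conjE)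
  then have "count_list (ev q k) (Recv p M)
      \<le> (if k = 0 then 0 else count_list (outputs n t ev p (k - 1)) M)"
    using assms(1,2) by simp
  moreover have "count_list (ev q k) (Recv p M) \<noteq> 0"
    using assms(3) by (simp add: count_list_0_iff)
  ultimately have "k \<noteq> 0" "count_list (outputs n t ev p (k - 1)) M \<noteq> 0"
    by (auto split: if_splits)
  then show ?thesis by (simp add: count_list_0_iff)
qed

lemma received_from_faulty_signed:
  assumes "q \<in> C" "b \<notin> C" "Recv b (Bundle m sn j sigs) \<in> set (ev q k)" "x \<in> sigs" "x \<in> C"
  shows "2 \<le> k \<and> (m, sn, j) \<in> psigned (state_after n t ev x (k - 2))"
proof -
  have "\<forall>q\<in>C. \<forall>k b m sn j sigs. b \<notin> C \<longrightarrow> Recv b (Bundle m sn j sigs) \<in> set (ev q k) \<longrightarrow>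
          (\<forall>x\<in>sigs \<inter> C. 2 \<le> k \<and> (m, sn, j) \<in> psigned (state_after n t ev x (k - 2)))"
    using exec unfolding mbrb_exec_def by (elim conjE)
  with assms show ?thesis by blast
qed

lemma broadcast_reaches:
  assumes "p \<in> C" "M \<in> set (outputs n t ev p k)"
  shows "card C - d \<le> card {q\<in>C. Recv p M \<in> set (ev q (Suc k))}"
proof -
  have "card {q\<in>C. Recv p M \<notin> set (ev q (Suc k))} \<le> d"
    using exec assms unfolding mbrb_exec_def by (elim conjE) blast
  moreover have "card C = card {q\<in>C. Recv p M \<in> set (ev q (Suc k))}
      + card {q\<in>C. Recv p M \<notin> set (ev q (Suc k))}"
    using finite_correct
    by (subst card_Un_disjoint[symmetric]) (auto intro: arg_cong[where f = card])
  ultimately show ?thesis by linarith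
qed

lemma state_after_eq: "state_after n t ev q k = fst (run n t q (pre_state n t ev q k) (ev q k))"
  by (simp add: state_after_def)

lemma pre_state_mono: "k \<le> k' \<Longrightarrow> pstate_le (pre_state n t ev q k) (pre_state n t ev q k')"
proof (induction k' rule: dec_induct)
  case (step k')
  then show ?case using run_pstate_le pstate_le_trans by fastforce
qed simp

lemma state_after_mono: "k \<le> k' \<Longrightarrow> pstate_le (state_after n t ev q k) (state_after n t ev q k')"
  unfolding state_after_def by (rule pre_state_mono) simp

lemma saved_in_range_pre_state: "q < n \<Longrightarrow> saved_in_range n (pre_state n t ev q k)"
proof (induction k)
  case 0
  then show ?case by (simp add: saved_in_range_def init_state_def)
qed (simp add: run_saved_in_range)

lemma active_origin:
  "active (state_after n t ev q k) X \<Longrightarrow> \<exists>k'\<le>k. \<exists>e\<in>set (ev q k'). concerns q X e"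
proof (induction k)
  case 0
  then show ?case
    using run_active_origin[of n t q init_state "ev q 0" X]
    by (auto simp: state_after_eq active_def init_state_def)
next
  case (Suc k)
  then have "active (state_after n t ev q k) X \<or> (\<exists>e\<in>set (ev q (Suc k)). concerns q X e)"
    using run_active_origin by (fastforce simp: state_after_eq state_after_def)
  with Suc.IH show ?case using le_SucI by blast
qed

text \<open>Induction on the receipt time: a correct relay either is the author broadcasting the
  triplet or itself received it one step earlier; a faulty relay is covered by unforgeability.\<close>
lemma received_signed_by_author:
  assumes "j \<in> C" "q \<in> C" "Recv src (Bundle m sn j sigs) \<in> set (ev q k)" "j \<in> sigs"
  shows "0 < k \<and> (m, sn, j) \<in> psigned (state_after n t ev j (k - 1))"
  using assms(2-4)
proof (induction k arbitrary: q src sigs rule: less_induct)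
  case (less k)
  show ?case
  proof (cases "src \<in> C")
    case False
    from received_from_faulty_signed[OF less.prems(1) False less.prems(2,3) assms(1)]
    have "2 \<le> k" "(m, sn, j) \<in> psigned (state_after n t ev j (k - 2))" by auto
    moreover have "psigned (state_after n t ev j (k - 2)) \<subseteq> psigned (state_after n t ev j (k - 1))"
      by (intro pstate_leD(2) state_after_mono) simp
    ultimately show ?thesis by auto
  next
    case True
    from received_from_correct[OF less.prems(1) True less.prems(2)] have "0 < k"
      and "Bundle m sn j sigs \<in> set (snd (run n t src (pre_state n t ev src (k - 1)) (ev src (k - 1))))"
      by (auto simp: outputs_def)
    from run_output_concerns[OF this(2)] obtain e
      where e: "e \<in> set (ev src (k - 1))" "concerns src (m, sn, j) e"
      by blast
    then consider "e = Bcast m sn" "j = src"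
      | src' sigs' where "e = Recv src' (Bundle m sn j sigs')" "j \<in> sigs'"
      unfolding concerns_def by auto
    then show ?thesis
    proof cases
      case 1
      with e \<open>0 < k\<close> show ?thesis by (simp add: state_after_eq run_Bcast)
    next
      case 2
      with less.IH[of "k - 1" src] True e \<open>0 < k\<close>
      have "(m, sn, j) \<in> psigned (state_after n t ev j (k - 1 - 1))" by auto
      moreover have
        "psigned (state_after n t ev j (k - 1 - 1)) \<subseteq> psigned (state_after n t ev j (k - 1))"
        by (intro pstate_leD(2) state_after_mono) simp
      ultimately show ?thesis using \<open>0 < k\<close> by auto
    qed
  qed
qed

lemma received_signers_saved:
  assumes "r \<in> C" "Recv src (Bundle m sn j S) \<in> set (ev r k)" "j \<in> S" "j < n" "k \<le> K"
    and "\<nexists>m'. (m', sn, j) \<in> pdelivered (state_after n t ev r K)"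
  shows "S \<inter> {..<n} \<subseteq> psaved (state_after n t ev r K) (m, sn, j)"
proof -
  have "\<nexists>m'. (m', sn, j) \<in> pdelivered (state_after n t ev r k)"
    using assms(6) pstate_leD(3)[OF state_after_mono[OF assms(5)]] by blast
  from run_Recv_saves_signers(1)[OF assms(2-4) this[unfolded state_after_eq]]
  have "S \<inter> {..<n} \<subseteq> psaved (state_after n t ev r k) (m, sn, j)"
    by (simp add: state_after_eq)
  also have "\<dots> \<subseteq> psaved (state_after n t ev r K) (m, sn, j)"
    by (intro pstate_leD(1) state_after_mono assms(5))
  finally show ?thesis .
qed

lemma delivery_reaches_quorum:
  assumes "q \<in> C" "(m, sn, j) \<in> pdelivered (state_after n t ev q K)"
  shows "card C - d \<le> card {r\<in>C. \<exists>m'. (m', sn, j) \<in> pdelivered (state_after n t ev r (Suc K))}"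
proof -
  have "(m, sn, j) \<notin> pdelivered (pre_state n t ev q 0)" by (simp add: init_state_def)
  with assms(2) obtain k where k: "k < Suc K" "(m, sn, j) \<notin> pdelivered (pre_state n t ev q k)"
    "(m, sn, j) \<in> pdelivered (pre_state n t ev q (Suc k))"
    using ex_first_step[where P = "\<lambda>k. (m, sn, j) \<in> pdelivered (pre_state n t ev q k)"]
    unfolding state_after_def by blast
  from run_delivers_outputs_quorum[OF k(2) k(3)[unfolded pre_state.simps]
      saved_in_range_pre_state[OF correct_less_n[OF assms(1)]] correct_less_n[OF assms(1)]]
  obtain S where S: "Bundle m sn j S \<in> set (outputs n t ev q k)" "j \<in> S" "S \<subseteq> {..<n}"
    "real (card S) > real (n + t) / 2"
    unfolding outputs_def by blast
  have "{r\<in>C. Recv q (Bundle m sn j S) \<in> set (ev r (Suc k))}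
          \<subseteq> {r\<in>C. \<exists>m'. (m', sn, j) \<in> pdelivered (state_after n t ev r (Suc K))}"
  proof safe
    fix r assume r: "r \<in> C" "Recv q (Bundle m sn j S) \<in> set (ev r (Suc k))"
    have "S \<inter> {..<n} = S" using S(3) by blast
    with S(4) have quorum: "real (card (S \<inter> {..<n})) > real (n + t) / 2" by simp
    from S(2,3) have "j < n" by blast
    from run_Recv_quorum_delivers[OF r(2) S(2) this
        saved_in_range_pre_state[OF correct_less_n[OF r(1)]] correct_less_n[OF r(1)] quorum]
    obtain m' where "(m', sn, j) \<in> pdelivered (state_after n t ev r (Suc k))"
      unfolding state_after_eq by blast
    with pstate_leD(3)[OF state_after_mono[of "Suc k" "Suc K" r]] k(1)
    show "\<exists>m'. (m', sn, j) \<in> pdelivered (state_after n t ev r (Suc K))" by auto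
  qed
  then have "card {r\<in>C. Recv q (Bundle m sn j S) \<in> set (ev r (Suc k))}
      \<le> card {r\<in>C. \<exists>m'. (m', sn, j) \<in> pdelivered (state_after n t ev r (Suc K))}"
    by (rule card_mono[rotated]) (use finite_correct in auto)
  with broadcast_reaches[OF assms(1) S(1)] show ?thesis by linarith
qed

end

locale correct_broadcast = mbrb_execution n t d C ev
  for n t d C and ev :: "nat \<Rightarrow> nat \<Rightarrow> 'm event list" +
  fixes i sn \<tau> :: nat and m :: 'm
  assumes author_correct: "i \<in> C" and broadcast: "Bcast m sn \<in> set (ev i \<tau>)"
begin

lemma author_active_imp_broadcast:
  "active (state_after n t ev i k) (m', sn, i) \<Longrightarrow> m' = m \<and> \<tau> \<le> k"
proof (induction k rule: less_induct)
  case (less k)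
  from active_origin[OF less.prems] obtain k' e
    where "k' \<le> k" "e \<in> set (ev i k')" "concerns i (m', sn, i) e"
    by blast
  then consider "Bcast m' sn \<in> set (ev i k')"
    | src sigs where "Recv src (Bundle m' sn i sigs) \<in> set (ev i k')" "i \<in> sigs"
    unfolding concerns_def by auto
  then show ?case
  proof cases
    case 1
    with Bcast_unique[OF author_correct broadcast] \<open>k' \<le> k\<close> show ?thesis by auto
  next
    case 2
    from received_signed_by_author[OF author_correct author_correct 2]
    have "0 < k'" "active (state_after n t ev i (k' - 1)) (m', sn, i)"
      by (auto simp: active_def)
    moreover from \<open>0 < k'\<close> \<open>k' \<le> k\<close> have "k' - 1 < k" by linarith
    ultimately show ?thesis using less.IH \<open>k' \<le> k\<close> by fastforce
  qed
qed

lemma received_imp_broadcast: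
  assumes "q \<in> C" "Recv src (Bundle m' sn i sigs) \<in> set (ev q k)" "i \<in> sigs"
  shows "m' = m \<and> \<tau> < k"
proof -
  from received_signed_by_author[OF author_correct assms]
  have "0 < k" "active (state_after n t ev i (k - 1)) (m', sn, i)"
    by (auto simp: active_def)
  with author_active_imp_broadcast show ?thesis by fastforce
qed

lemma active_imp_broadcast:
  assumes "q \<in> C" "active (state_after n t ev q k) (m', sn, i)"
  shows "m' = m \<and> \<tau> \<le> k \<and> (q \<noteq> i \<longrightarrow> \<tau> < k)"
proof -
  from active_origin[OF assms(2)] obtain k' e
    where "k' \<le> k" "e \<in> set (ev q k')" "concerns q (m', sn, i) e"
    by blast
  then consider "Bcast m' sn \<in> set (ev q k')" "q = i"
    | src sigs where "Recv src (Bundle m' sn i sigs) \<in> set (ev q k')" "i \<in> sigs"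
    unfolding concerns_def by auto
  then show ?thesis
  proof cases
    case 1
    with Bcast_unique[OF author_correct broadcast] \<open>k' \<le> k\<close> show ?thesis by auto
  next
    case 2
    with received_imp_broadcast[OF assms(1)] \<open>k' \<le> k\<close> show ?thesis by fastforce
  qed
qed

lemma delivered_imp_broadcast:
  "q \<in> C \<Longrightarrow> (m', sn, i) \<in> pdelivered (state_after n t ev q k) \<Longrightarrow> m' = m"
  using active_imp_broadcast by (auto simp: active_def)

lemma quorum_saved_delivered_pre_state:
  assumes "q \<in> C"
  shows "quorum_saved_delivered n t sn i q (pre_state n t ev q k)"
proof (induction k)
  case 0
  then show ?case by (simp add: quorum_saved_delivered_def init_state_def)
next
  case (Suc k)
  show ?case
  proof (cases "q = i \<and> k = \<tau>")
    case False
    with Bcast_unique[OF author_correct broadcast]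
    have "\<forall>e\<in>set (ev q k). \<nexists>m'. e = Bcast m' sn \<and> i = q" by blast
    from run_quorum_saved_delivered[OF Suc.IH this] show ?thesis by simp
  next
    case True
    have "psaved (pre_state n t ev i \<tau>) (m', sn, i) \<subseteq> {i}" for m'
    proof (cases \<tau>)
      case (Suc k')
      with active_imp_broadcast[OF author_correct, of k' m'] show ?thesis
        by (auto simp: active_def state_after_def)
    qed (simp add: init_state_def)
    moreover have
      "\<forall>e\<in>set (ev i \<tau>). \<nexists>src m' sigs. e = Recv src (Bundle m' sn i sigs) \<and> i \<in> sigs"
      using received_imp_broadcast[OF author_correct] by blast
    ultimately have
      "\<forall>m'. psaved (fst (run n t i (pre_state n t ev i \<tau>) (ev i \<tau>))) (m', sn, i) \<subseteq> {i}"
      by (intro run_own_saved_singleton) auto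
    with True show ?thesis by (simp add: quorum_saved_delivered_def)
  qed
qed

lemma echo_bundle:
  assumes "w \<in> C" "w \<noteq> i" "Recv src (Bundle m' sn i S) \<in> set (ev w (Suc \<tau>))" "i \<in> S"
    and "\<nexists>m'. (m', sn, i) \<in> pdelivered (state_after n t ev w (Suc \<tau>))"
  shows "\<exists>S'. Bundle m sn i S' \<in> set (outputs n t ev w (Suc \<tau>)) \<and> w \<in> S' \<and> i \<in> S'"
proof -
  let ?s = "pre_state n t ev w (Suc \<tau>)"
  have "\<nexists>m'. (m', sn, i) \<in> pdelivered (fst (run n t w ?s (ev w (Suc \<tau>))))"
    using assms(5) by (simp add: state_after_eq)
  from run_Recv_saves_signers(2)[OF assms(3,4) correct_less_n[OF author_correct] this]
  obtain m'' where signed: "(m'', sn, i) \<in> psigned (fst (run n t w ?s (ev w (Suc \<tau>))))"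
    by blast
  have unsigned: "\<nexists>m''. (m'', sn, i) \<in> psigned ?s"
  proof
    assume "\<exists>m''. (m'', sn, i) \<in> psigned ?s"
    then obtain m'' where "active (state_after n t ev w \<tau>) (m'', sn, i)"
      by (auto simp: active_def state_after_def)
    from active_imp_broadcast[OF assms(1) this] assms(2) show False by simp
  qed
  from run_first_signature_outputs[OF unsigned signed assms(2)] obtain m3 S'
    where out: "Bundle m3 sn i S' \<in> set (outputs n t ev w (Suc \<tau>))" "w \<in> S'" "i \<in> S'"
    unfolding outputs_def by blast
  from run_output_concerns[OF out(1)[unfolded outputs_def]] obtain e
    where "e \<in> set (ev w (Suc \<tau>))" "concerns w (m3, sn, i) e"
    by blast
  with assms(2) obtain src' sigs
    where "Recv src' (Bundle m3 sn i sigs) \<in> set (ev w (Suc \<tau>))" "i \<in> sigs"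
    unfolding concerns_def by auto
  with received_imp_broadcast[OF assms(1)] have "m3 = m" by blast
  with out show ?thesis by blast
qed

definition echoed :: "nat \<Rightarrow> nat \<Rightarrow> bool" where
  "echoed r w \<longleftrightarrow>
     (\<exists>S k. k \<le> Suc (Suc \<tau>) \<and> i \<in> S \<and> w \<in> S \<and> Recv w (Bundle m sn i S) \<in> set (ev r k))"

lemma echoed_saved:
  assumes "r \<in> C" "w \<in> C" "echoed r w"
    and "\<nexists>m'. (m', sn, i) \<in> pdelivered (state_after n t ev r (Suc (Suc \<tau>)))"
  shows "w \<in> psaved (state_after n t ev r (Suc (Suc \<tau>))) (m, sn, i)"
proof -
  from assms(3) obtain S k where S: "k \<le> Suc (Suc \<tau>)" "i \<in> S" "w \<in> S"
    "Recv w (Bundle m sn i S) \<in> set (ev r k)"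
    unfolding echoed_def by blast
  from received_signers_saved[OF assms(1) S(4,2) correct_less_n[OF author_correct] S(1) assms(4)]
    S(3) correct_less_n[OF assms(2)]
  show ?thesis by blast
qed

lemma echo_reaches_quorum:
  assumes "w \<in> C" "Recv i (Bundle m sn i S) \<in> set (ev w (Suc \<tau>))" "i \<in> S"
    and "\<nexists>m'. (m', sn, i) \<in> pdelivered (state_after n t ev w (Suc \<tau>))"
  shows "card C - d \<le> card {r\<in>C. echoed r w}"
proof -
  obtain k S'
    where k: "k \<le> Suc \<tau>" "Bundle m sn i S' \<in> set (outputs n t ev w k)" "w \<in> S'" "i \<in> S'"
  proof (cases "w = i")
    case True
    from received_from_correct[OF assms(1) author_correct assms(2)]
    have "Bundle m sn i S \<in> set (outputs n t ev w \<tau>)" by (simp add: True)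
    with True assms(3) show ?thesis by (intro that[of \<tau> S]) simp_all
  next
    case False
    from echo_bundle[OF assms(1) False assms(2-4)] obtain S'
      where "Bundle m sn i S' \<in> set (outputs n t ev w (Suc \<tau>))" "w \<in> S'" "i \<in> S'"
      by blast
    then show ?thesis by (intro that[of "Suc \<tau>" S']) simp_all
  qed
  have "Suc k \<le> Suc (Suc \<tau>)" using k(1) by simp
  with k(3,4)
  have "{r\<in>C. Recv w (Bundle m sn i S') \<in> set (ev r (Suc k))} \<subseteq> {r\<in>C. echoed r w}"
    unfolding echoed_def by blast
  then have
    "card {r\<in>C. Recv w (Bundle m sn i S') \<in> set (ev r (Suc k))} \<le> card {r\<in>C. echoed r w}"
    by (rule card_mono[rotated]) (use finite_correct in auto)
  with broadcast_reaches[OF assms(1) k(2)] show ?thesis by linarith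
qed

lemma correct_delivers_within_two_steps:
  assumes "real (card C) * (real (n + t) / 2) < real ((card C - d) * (card C - d))"
  shows "\<exists>q\<in>C. (m, sn, i) \<in> pdelivered (state_after n t ev q (Suc (Suc \<tau>)))"
proof (rule ccontr)
  let ?b = "real (n + t) / 2"
  assume "\<not> ?thesis"
  then have undelivered: "\<nexists>m'. (m', sn, i) \<in> pdelivered (state_after n t ev q k)"
    if "q \<in> C" "k \<le> Suc (Suc \<tau>)" for q k
    using that delivered_imp_broadcast pstate_leD(3)[OF state_after_mono[OF that(2)]] by blast
  from run_Bcast(2)[OF broadcast] obtain S0
    where S0: "Bundle m sn i S0 \<in> set (outputs n t ev i \<tau>)" "i \<in> S0"
    unfolding outputs_def by blast
  define W where "W = {w\<in>C. Recv i (Bundle m sn i S0) \<in> set (ev w (Suc \<tau>))}"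
  have card_W: "card C - d \<le> card W"
    unfolding W_def by (rule broadcast_reaches[OF author_correct S0(1)])
  have "\<exists>r\<in>C. ?b < real (card {w\<in>W. echoed r w})"
  proof (rule double_counting_pigeonhole[OF finite_correct])
    show "finite W" unfolding W_def using finite_correct by simp
    show "card C - d \<le> card {r\<in>C. echoed r w}" if "w \<in> W" for w
      using that echo_reaches_quorum[OF _ _ S0(2) undelivered] unfolding W_def by simp
    from card_W have "(card C - d) * (card C - d) \<le> card W * (card C - d)"
      by (rule mult_le_mono1)
    with assms show "real (card C) * ?b < real (card W * (card C - d))"
      by (metis of_nat_le_iff order.strict_trans2)
  qed
  then obtain r where r: "r \<in> C" and quorum: "?b < real (card {w\<in>W. echoed r w})" by blast
  let ?saved = "psaved (state_after n t ev r (Suc (Suc \<tau>))) (m, sn, i)"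
  have "{w\<in>W. echoed r w} \<subseteq> ?saved"
    using echoed_saved[OF r _ _ undelivered[OF r]] unfolding W_def by blast
  moreover have "finite ?saved"
    unfolding state_after_def
    by (rule saved_in_range_finite[OF saved_in_range_pre_state[OF correct_less_n[OF r]]])
  ultimately have "card {w\<in>W. echoed r w} \<le> card ?saved" by (rule card_mono[rotated])
  with quorum have big: "?b < real (card ?saved)" by linarith
  with quorum_saved_delivered_pre_state[OF r, of "Suc (Suc (Suc \<tau>))"] undelivered[OF r]
  have "?saved \<subseteq> {r}"
    unfolding quorum_saved_delivered_def state_after_def by blast
  then have "card ?saved \<le> 1" using card_mono[of "{r}" ?saved] by simp
  with big have "?b < 1" by linarith
  \<comment> \<open>Only this degenerate threshold survives, and then the first receipt of i's bundle
    already delivers.\<close>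
  have "W \<noteq> {}" using card_W d_less_card_correct by auto
  then obtain w where w: "w \<in> C" "Recv i (Bundle m sn i S0) \<in> set (ev w (Suc \<tau>))"
    unfolding W_def by blast
  have "i \<in> S0 \<inter> {..<n}" using S0(2) correct_less_n[OF author_correct] by blast
  then have "1 \<le> card (S0 \<inter> {..<n})" by (simp add: Suc_le_eq card_gt_0_iff) blast
  with \<open>?b < 1\<close> have "?b < real (card (S0 \<inter> {..<n}))" by linarith
  from run_Recv_quorum_delivers[OF w(2) S0(2) correct_less_n[OF author_correct]
      saved_in_range_pre_state[OF correct_less_n[OF w(1)]] correct_less_n[OF w(1)] this]
  obtain m' where "(m', sn, i) \<in> pdelivered (state_after n t ev w (Suc \<tau>))"
    unfolding state_after_eq by blast
  with undelivered[OF w(1), of "Suc \<tau>"] show False by simp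
qed

end

theorem mainTheorem9:
  fixes n t d :: nat and C :: "nat set" and ev :: "nat \<Rightarrow> nat \<Rightarrow> 'm event list"
    and i sn \<tau> :: nat and m :: 'm
  assumes "mbrb_exec n t d C ev"
    and "n > 3 * t + 2 * d"
    and "i \<in> C"
    and "Bcast m sn \<in> set (ev i \<tau>)"
    and "real d < real (card C) - sqrt (real (card C) * (real (n + t) / 2))"
  shows "card {q \<in> C. (m, sn, i) \<in> pdelivered (state_after n t ev q (\<tau> + 3))} \<ge> card C - d"
proof -
  interpret correct_broadcast n t d C ev i sn \<tau> m
    using assms(1,3,4) by unfold_locales
  from square_gt_of_less_diff_sqrt[OF assms(5)]
  obtain q where q: "q \<in> C" "(m, sn, i) \<in> pdelivered (state_after n t ev q (Suc (Suc \<tau>)))"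
    using correct_delivers_within_two_steps by auto
  let ?delivered_any = "{r\<in>C. \<exists>m'. (m', sn, i) \<in> pdelivered (state_after n t ev r (\<tau> + 3))}"
  have "card C - d \<le> card ?delivered_any"
    using delivery_reaches_quorum[OF q] by (simp add: numeral_3_eq_3)
  also have "?delivered_any = {q \<in> C. (m, sn, i) \<in> pdelivered (state_after n t ev q (\<tau> + 3))}"
    using delivered_imp_broadcast by blast
  finally show ?thesis .
qed

end
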